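(* Let $\rho>0$, $x>0$, $\alpha,\beta\in\{\pm1\}$, and $\eta\in\mathbb{R}$ with $\alpha\eta\not\equiv-\pi$ and $\alpha\eta\not\equiv 0 \pmod{2\pi\rho}$. Let $\mathcal{P}_\rho(\alpha\eta)=\{\frac{\pi}{2}+\alpha\eta+2\pi\rho k : k\in\mathbb{Z}\}\cap[-\pi,\pi)$, for $\varphi\in\mathcal{P}_\rho(\alpha\eta)$ let $\sigma_\varphi=\operatorname{sgn}(\cos\varphi)$, and let $a^{(\alpha,\beta)}_\varphi=-\frac{\beta\rho\,e^{x\beta i}}{2\pi i}$. Then $$\sum_{\varphi \in \mathcal{P}_\rho(\alpha\eta)} a_\varphi^{(\alpha,\beta)} \int_{-\infty}^\infty \frac{e^{-x s^2}}{s - \sigma_\varphi \left( \beta i - i \sin\varphi \right)^{1/2}} \, ds = - \frac{\rho}{2} \sum_{\varphi \in \mathcal{P}_\rho(\alpha\eta)} \sigma_\varphi \exp\!\left[ i x \sin\varphi \right] \operatorname{erfc}\!\left[ e^{-\beta \frac{\pi}{4}i} \, x^{1/2} \left(1 - \beta \sin\varphi \right)^{1/2} \right].$$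
   Context: Square roots are principal branches. $\operatorname{erfc}(z)=\frac{2}{\sqrt{\pi}}\int_z^\infty e^{-u^2}\,du$ is the complementary error function. (The numbers $a^{(\alpha,\beta)}_\varphi$ are the residues at its poles $s=\sigma_\varphi(\beta i-i\sin\varphi)^{1/2}$ of the function $A_{\alpha,\beta}(s)=\frac{\beta e^{x\beta i}}{2\pi}\cot\!\big[\frac{\frac{\pi}{2}+\alpha\eta+i\log[\beta i-s^2+s(s^2-2\beta i)^{1/2}]}{2\rho}\big](s^2-2\beta i)^{-1/2}$.) *)

theory Defs
  imports "HOL-Analysis.Analysis"
begin

definition cerfc :: "complex \<Rightarrow> complex" where
  "cerfc z = complex_of_real (2 / sqrt pi) * integral {0..} (\<lambda>t::real. exp (- ((z + complex_of_real t)^2)))"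

definition Pset :: "real \<Rightarrow> real \<Rightarrow> real set" where
  "Pset \<rho> c = {\<phi>. (\<exists>k::int. \<phi> = pi/2 + c + 2*pi*\<rho> * of_int k) \<and> -pi \<le> \<phi> \<and> \<phi> < pi}"

end

theory Submission
  imports Defs "HOL-Probability.Characteristic_Functions"
begin

text \<open>With z = sgn(cos phi) (beta i - i sin phi)^(1/2) one has z^2 = i (beta - sin phi) and
  Im z \<noteq> 0, so every summand is an instance of the Gaussian Cauchy transform
    integral exp(-x s^2) / (s - z) ds = i e pi exp(-x z^2) erfc(-i e sqrt(x) z),   e = sgn (Im z).
  This follows by writing 1/(y - w) as a Laplace integral over the half-line, exchanging the
  order of integration so that the characteristic function of the standard normal
  distribution appears, and completing the square in the remaining half-line integral.
  The prefactors then combine to -rho sgn(cos phi) / 2, and the two erfc arguments coincide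
  because (beta i - i sin phi)^(1/2) = ((1 - beta sin phi)/2)^(1/2) (1 + beta i).\<close>

lemma gaussian_char_fun:
  fixes t :: real
  shows "has_bochner_integral lborel
           (\<lambda>y. of_real (exp (-(y^2)/2)) * exp (\<i> * of_real (t*y)))
           (of_real (sqrt (2*pi) * exp (-(t^2)/2)) :: complex)"
proof -
  have m: "(\<lambda>x. iexp (t * x)) \<in> borel_measurable lborel" by measurable
  have "(CLINT x | std_normal_distribution. iexp (t * x)) = of_real (exp (- (t^2) / 2))"
    using char_std_normal_distribution[THEN fun_cong, of t] unfolding char_def by simp
  then have val: "(CLINT x | lborel. std_normal_density x *\<^sub>R iexp (t * x)) = of_real (exp (- (t^2) / 2))"
    by (subst (asm) integral_density) (auto simp: m)
  have int: "integrable lborel (\<lambda>x. std_normal_density x *\<^sub>R iexp (t * x))"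
    by (rule Bochner_Integration.integrable_bound[OF integrable_normal_density[where \<mu>=0 and \<sigma>=1]])
       (auto simp: m)
  have "(\<lambda>y. of_real (exp (-(y^2)/2)) * exp (\<i> * of_real (t*y)))
      = (\<lambda>y. of_real (sqrt (2*pi)) * (std_normal_density y *\<^sub>R iexp (t * y)))"
    by (auto simp: std_normal_density_def scaleR_conv_of_real)
  then show ?thesis
    using has_bochner_integral_mult_right[OF has_bochner_integral_integrable[OF int]] val by simp
qed

lemma integrable_gaussian: "integrable lborel (\<lambda>y::real. exp (-(y^2)/2))"
proof -
  have "integrable lborel (\<lambda>y. sqrt (2*pi) * std_normal_density y)"
    by (intro integrable_mult_right integrable_normal_density) simp
  then show ?thesis by (simp add: std_normal_density_def)
qed

lemma integrable_exp_halfline: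
  fixes a :: real
  assumes "a < 0"
  shows "integrable lborel (\<lambda>u. indicator {0..} u * exp (a * u))"
proof -
  have "(\<integral>\<^sup>+u. ennreal (exp (a * u)) * indicator {0..} u \<partial>lborel) = 0 - exp (a * 0) / a"
  proof (rule nn_integral_FTC_atLeast)
    show "\<And>u. 0 \<le> u \<Longrightarrow> ((\<lambda>u. exp (a * u) / a) has_real_derivative exp (a * u)) (at u)"
      using assms by (auto intro!: derivative_eq_intros)
    have "((\<lambda>u. exp (a * u)) \<longlongrightarrow> 0) at_top"
      by (rule filterlim_compose[OF exp_at_bot
            filterlim_tendsto_neg_mult_at_bot[OF tendsto_const assms filterlim_ident]])
    then show "((\<lambda>u. exp (a * u) / a) \<longlongrightarrow> 0) at_top"
      using tendsto_divide[OF _ tendsto_const, of _ 0 _ a] assms by simp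
  qed auto
  then have "(\<integral>\<^sup>+u. ennreal (indicator {0..} u * exp (a * u)) \<partial>lborel) = ennreal (- 1 / a)"
    by (simp add: mult.commute indicator_mult_ennreal)
  then show ?thesis
    by (intro integrableI_nn_integral_finite[where x="-1/a"]) auto
qed

lemma integral_exp_interval:
  fixes c :: complex
  assumes c: "c \<noteq> 0" and b: "0 \<le> b"
  shows "(\<integral>u. indicator {0..b} u *\<^sub>R exp (c * of_real u) \<partial>lborel) = exp (c * of_real b) / c - 1 / c"
proof -
  have "(\<integral>u. indicator {0..b} u *\<^sub>R exp (c * of_real u) \<partial>lborel) = exp (c * of_real b) / c - exp (c * of_real 0) / c"
  proof (rule integral_FTC_Icc)
    show "continuous_on {0..b} (\<lambda>u. exp (c * of_real u))"
      by (intro continuous_intros)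
    fix u :: real
    have "((\<lambda>z. exp (c * z) / c) has_field_derivative exp (c * of_real u)) (at (of_real u))"
      using c by (auto intro!: derivative_eq_intros)
    then show "((\<lambda>u. exp (c * of_real u) / c) has_vector_derivative exp (c * of_real u))
        (at u within {0..b})"
      by (rule has_vector_derivative_real_field)
  qed (use b in simp)
  then show ?thesis
    by simp
qed

lemma has_bochner_integral_exp_halfline:
  fixes c :: complex
  assumes c: "Re c < 0"
  shows "has_bochner_integral lborel (\<lambda>u. indicator {0..} u *\<^sub>R exp (c * of_real u)) (- 1 / c)"
proof -
  define s where "s = (\<lambda>(n::nat) (u::real). indicator {0..real n} u *\<^sub>R exp (c * of_real u))"
  define f where "f = (\<lambda>u::real. indicator {0..} u *\<^sub>R exp (c * of_real u))"
  have fm: "f \<in> borel_measurable lborel" and sm: "\<And>n. s n \<in> borel_measurable lborel"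
    unfolding f_def s_def by measurable
  have wi: "integrable lborel (\<lambda>u. indicator {0..} u * exp (Re c * u))"
    by (rule integrable_exp_halfline[OF c])
  have lim: "AE u in lborel. (\<lambda>n. s n u) \<longlonglongrightarrow> f u"
  proof (rule AE_I2)
    fix u :: real
    obtain N :: nat where "u \<le> real N" using real_arch_simple by blast
    then have "\<forall>n\<ge>N. s n u = f u"
      unfolding s_def f_def by (auto simp: indicator_def)
    then show "(\<lambda>n. s n u) \<longlonglongrightarrow> f u"
      by (intro tendsto_eventually) (auto simp: eventually_sequentially)
  qed
  have bound: "\<And>n. AE u in lborel. norm (s n u) \<le> indicator {0..} u * exp (Re c * u)"
    unfolding s_def by (auto simp: indicator_def)
  note dominated = fm sm wi lim bound
  have c0: "c \<noteq> 0" using c by auto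
  have partial: "integral\<^sup>L lborel (s n) = exp (c * of_real (real n)) / c - 1 / c" for n
    unfolding s_def using integral_exp_interval[OF c0] by simp
  have "(\<lambda>n. exp (c * of_real (real n))) \<longlonglongrightarrow> 0"
  proof (rule tendsto_norm_zero_cancel)
    have "(\<lambda>n. exp (Re c * real n)) \<longlonglongrightarrow> 0"
      by (rule filterlim_compose[OF exp_at_bot
            filterlim_tendsto_neg_mult_at_bot[OF tendsto_const c filterlim_real_sequentially]])
    then show "(\<lambda>n. norm (exp (c * of_real (real n)))) \<longlonglongrightarrow> 0"
      by simp
  qed
  then have "(\<lambda>n. integral\<^sup>L lborel (s n)) \<longlonglongrightarrow> - 1 / c"
    unfolding partial using tendsto_diff[OF tendsto_divide[OF _ tendsto_const c0] tendsto_const]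
    by fastforce
  moreover have "(\<lambda>n. integral\<^sup>L lborel (s n)) \<longlonglongrightarrow> integral\<^sup>L lborel f"
    by (rule integral_dominated_convergence[OF dominated])
  ultimately show ?thesis
    using integrable_dominated_convergence[OF dominated] LIMSEQ_unique
    unfolding f_def by (fastforce simp: has_bochner_integral_iff)
qed

lemma integrable_gaussian_laplace_kernel:
  fixes w :: complex and e :: real
  assumes e: "e \<in> {-1, 1}" and pos: "e * Im w > 0"
  shows "integrable (lborel \<Otimes>\<^sub>M lborel) (\<lambda>(y, u). of_real (exp (-(y^2)/2))
           * (indicator {0..} u *\<^sub>R exp (- \<i> * of_real e * (of_real y - w) * of_real u)))"
    (is "integrable _ (\<lambda>(y, u). ?K y u)")
proof (rule lborel_pair.Fubini_integrable)
  have norm_K: "norm (?K y u) = exp (-(y^2)/2) * (indicator {0..} u * exp (- (e * Im w) * u))" for y u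
    by (simp add: norm_mult indicator_def)
  show "(\<lambda>(y, u). ?K y u) \<in> borel_measurable (lborel \<Otimes>\<^sub>M lborel)" by measurable
  have "integrable lborel (\<lambda>y. exp (-(y^2)/2) * (\<integral>u. indicator {0..} u * exp (- (e * Im w) * u) \<partial>lborel))"
    by (intro integrable_mult_left integrable_gaussian)
  then show "integrable lborel (\<lambda>y. \<integral>u. norm (case (y, u) of (y, u) \<Rightarrow> ?K y u) \<partial>lborel)"
    by (simp only: prod.case norm_K integral_mult_right_zero)
  have "integrable lborel
      (\<lambda>u. indicator {0..} u *\<^sub>R exp ((- \<i> * of_real e * (of_real y - w)) * of_real u))" for y
    using pos by (intro integrable.intros[OF has_bochner_integral_exp_halfline]) simp
  then have "integrable lborel (\<lambda>u. ?K y u)" for y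
    by (rule integrable_mult_right)
  then show "AE y in lborel. integrable lborel (\<lambda>u. case (y, u) of (y, u) \<Rightarrow> ?K y u)"
    by simp
qed

text \<open>Expand \<open>1 / (y - w) = i e \<integral>\<^sub>0\<^sup>\<infinity> exp (-i e (y - w) u) du\<close> and integrate over \<open>y\<close> first.\<close>

lemma gaussian_cauchy_transform_laplace:
  fixes w :: complex and e :: real
  assumes e: "e \<in> {-1, 1}" and pos: "e * Im w > 0"
  shows "has_bochner_integral lborel (\<lambda>y. of_real (exp (-(y^2)/2)) / (of_real y - w))
     (\<i> * of_real e * of_real (sqrt (2*pi)) * (\<integral>u. indicator {0..} u *\<^sub>R
        (exp (\<i> * of_real e * w * of_real u) * of_real (exp (-(u^2)/2))) \<partial>lborel))"
proof -
  define K where "K = (\<lambda>(y::real) (u::real). of_real (exp (-(y^2)/2))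
           * (indicator {0..} u *\<^sub>R exp (- \<i> * of_real e * (of_real y - w) * of_real u)))"
  define G where "G = (\<lambda>y::real. of_real (exp (-(y^2)/2)) / (of_real y - w))"
  have K: "integrable (lborel \<Otimes>\<^sub>M lborel) (\<lambda>(y, u). K y u)"
    unfolding K_def using integrable_gaussian_laplace_kernel[OF e pos] .
  have ie: "\<i> * complex_of_real e \<noteq> 0" using e by auto
  have inner_u: "(\<integral>u. K y u \<partial>lborel) = G y / (\<i> * of_real e)" for y
  proof -
    have "of_real y - w \<noteq> 0"
      using pos by (metis Im_complex_of_real mult_zero_right order_less_irrefl right_minus_eq)
    then have "of_real (exp (-(y^2)/2)) * (- 1 / (- \<i> * of_real e * (of_real y - w))) = G y / (\<i> * of_real e)"
      unfolding G_def using ie by (simp add: divide_simps)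
    moreover have "has_bochner_integral lborel
        (\<lambda>u. indicator {0..} u *\<^sub>R exp ((- \<i> * of_real e * (of_real y - w)) * of_real u))
        (- 1 / (- \<i> * of_real e * (of_real y - w)))"
      using pos by (intro has_bochner_integral_exp_halfline) simp
    then have "has_bochner_integral lborel (K y)
        (of_real (exp (-(y^2)/2)) * (- 1 / (- \<i> * of_real e * (of_real y - w))))"
      unfolding K_def by (rule has_bochner_integral_mult_right)
    ultimately show ?thesis
      by (simp add: has_bochner_integral_iff)
  qed
  have inner_y: "(\<integral>y. K y u \<partial>lborel) = of_real (sqrt (2*pi)) * (indicator {0..} u *\<^sub>R
      (exp (\<i> * of_real e * w * of_real u) * of_real (exp (-(u^2)/2))))" for u
  proof -
    have "K y u = (indicator {0..} u *\<^sub>R exp (\<i> * of_real e * w * of_real u))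
        * (of_real (exp (-(y^2)/2)) * exp (\<i> * of_real ((- e * u) * y)))" for y
      unfolding K_def by (simp add: indicator_def algebra_simps flip: exp_add)
    moreover have "(- e * u)^2 = u^2" using e by (auto simp: power2_eq_square)
    ultimately show ?thesis
      using has_bochner_integral_mult_right[OF gaussian_char_fun[of "- e * u"],
          of "indicator {0..} u *\<^sub>R exp (\<i> * of_real e * w * of_real u)"]
      by (simp add: has_bochner_integral_iff indicator_def)
  qed
  have "integrable lborel (\<lambda>y. (\<i> * of_real e) * (\<integral>u. K y u \<partial>lborel))"
    using lborel_pair.integrable_fst[OF K] by (rule integrable_mult_right)
  then have "integrable lborel G"
    using ie by (simp add: inner_u)
  moreover have "(\<integral>y. G y \<partial>lborel) = (\<i> * of_real e) * (\<integral>y. (\<integral>u. K y u \<partial>lborel) \<partial>lborel)"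
    using ie by (simp add: inner_u)
  moreover note lborel_pair.Fubini_integral[OF K]
  ultimately show ?thesis
    unfolding G_def inner_y integral_mult_right_zero by (simp add: has_bochner_integral_iff mult.assoc)
qed

lemma halfline_gaussian_complete_square:
  fixes c :: complex
  shows "(\<integral>u. indicator {0..} u *\<^sub>R (exp (c * of_real u) * of_real (exp (-(u^2)/2))) \<partial>lborel)
       = of_real (sqrt 2) * exp (c^2/2)
         * (\<integral>t. indicator {0..} t *\<^sub>R exp (-((- c / of_real (sqrt 2) + of_real t)^2)) \<partial>lborel)"
proof -
  have "(\<integral>u. indicator {0..} u *\<^sub>R (exp (c * of_real u) * of_real (exp (-(u^2)/2))) \<partial>lborel)
      = sqrt 2 *\<^sub>R (\<integral>t. indicator {0..} (0 + sqrt 2 * t) *\<^sub>R (exp (c * of_real (0 + sqrt 2 * t))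
          * of_real (exp (-((0 + sqrt 2 * t)^2)/2))) \<partial>lborel)"
    by (subst lborel_integral_real_affine[where c="sqrt 2" and t=0]) simp_all
  also have "(\<lambda>t. indicator {0..} (0 + sqrt 2 * t) *\<^sub>R (exp (c * of_real (0 + sqrt 2 * t))
          * of_real (exp (-((0 + sqrt 2 * t)^2)/2))))
      = (\<lambda>t. exp (c^2/2) * (indicator {0..} t *\<^sub>R exp (-((- c / of_real (sqrt 2) + of_real t)^2))))"
  proof
    fix t :: real
    have r2: "complex_of_real (sqrt 2) ^ 2 = 2"
      by (simp flip: of_real_power)
    have "c * of_real (sqrt 2 * t) + of_real (-((sqrt 2 * t)^2)/2)
        = c^2/2 + (-((- c / of_real (sqrt 2) + of_real t)^2))"
      by (simp add: field_simps power2_eq_square) (simp add: r2 flip: power2_eq_square)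
    then show "indicator {0..} (0 + sqrt 2 * t) *\<^sub>R (exp (c * of_real (0 + sqrt 2 * t))
          * of_real (exp (-((0 + sqrt 2 * t)^2)/2)))
        = exp (c^2/2) * (indicator {0..} t *\<^sub>R exp (-((- c / of_real (sqrt 2) + of_real t)^2)))"
      by (simp add: indicator_def zero_le_mult_iff flip: exp_of_real exp_add)
  qed
  finally show ?thesis
    by (simp add: scaleR_conv_of_real mult.assoc)
qed

lemma cerfc_conv_set_integral:
  assumes q: "Re q \<ge> 0"
  shows "cerfc q = of_real (2 / sqrt pi) * (\<integral>t. indicator {0..} t *\<^sub>R exp (-((q + of_real t)^2)) \<partial>lborel)"
proof -
  define f where "f = (\<lambda>t::real. exp (-((q + of_real t)^2)))"
  have "set_integrable lborel {0..} f"
    unfolding set_integrable_def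
  proof (rule Bochner_Integration.integrable_bound)
    show "integrable lborel (\<lambda>t. exp ((Im q)^2) * (indicator {0..} t *\<^sub>R exp (- t\<^sup>2)))"
      using gaussian_moment_0 by (intro integrable_mult_right) (auto simp: has_bochner_integral_iff)
    show "(\<lambda>t. indicator {0..} t *\<^sub>R f t) \<in> borel_measurable lborel"
      unfolding f_def by measurable
    have "norm (f t) \<le> exp ((Im q)^2) * exp (- t\<^sup>2)" if "t \<ge> 0" for t
    proof -
      have "Re (-((q + of_real t)^2)) = (Im q)^2 - (Re q + t)^2"
        by (simp add: power2_eq_square algebra_simps)
      also have "\<dots> \<le> (Im q)^2 - t^2"
        using that q by (simp add: power2_eq_square algebra_simps)
      finally have "exp (Re (-((q + of_real t)^2))) \<le> exp ((Im q)^2 - t^2)"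
        by simp
      then show ?thesis
        unfolding f_def by (simp add: mult_exp_exp)
    qed
    then show "AE t in lborel. norm (indicator {0..} t *\<^sub>R f t)
        \<le> norm (exp ((Im q)^2) * (indicator {0..} t *\<^sub>R exp (- t\<^sup>2)))"
      by (auto simp: indicator_def)
  qed
  then show ?thesis
    using set_borel_integral_eq_integral(2) unfolding cerfc_def set_lebesgue_integral_def f_def
    by fastforce
qed

lemma gaussian_cauchy_transform:
  fixes w :: complex and e :: real
  assumes e: "e \<in> {-1, 1}" and pos: "e * Im w > 0"
  shows "has_bochner_integral lborel (\<lambda>y. of_real (exp (-(y^2)/2)) / (of_real y - w))
           (\<i> * of_real e * of_real pi * exp (- (w^2)/2) * cerfc (- \<i> * of_real e * w / of_real (sqrt 2)))"
proof -
  let ?q = "- \<i> * of_real e * w / of_real (sqrt 2)"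
  let ?H = "\<integral>t. indicator {0..} t *\<^sub>R exp (-((?q + of_real t)^2)) \<partial>lborel"
  have sq: "(\<i> * of_real e * w)^2 / 2 = - (w^2) / 2"
    using e by (auto simp: power_mult_distrib)
  have "Re ?q \<ge> 0"
    using pos by simp
  then have cerfc: "cerfc ?q = of_real (2 / sqrt pi) * ?H"
    by (rule cerfc_conv_set_integral)
  have "sqrt (2*pi) * sqrt 2 = pi * (2 / sqrt pi)"
    by (simp add: real_sqrt_mult field_simps)
  then have const: "complex_of_real (sqrt (2*pi)) * of_real (sqrt 2) = of_real pi * of_real (2 / sqrt pi)"
    by (simp only: flip: of_real_mult)
  let ?E = "exp (- (w^2)/2)"
  have "\<i> * of_real e * of_real (sqrt (2*pi)) * (of_real (sqrt 2) * ?E * ?H)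
      = \<i> * of_real e * ?E * ((of_real (sqrt (2*pi)) * of_real (sqrt 2)) * ?H)"
    by (simp only: mult_ac)
  also have "\<dots> = \<i> * of_real e * of_real pi * ?E * cerfc ?q"
    unfolding const cerfc by (simp only: mult_ac)
  finally have prefactor: "\<i> * of_real e * of_real (sqrt (2*pi)) * (of_real (sqrt 2) * ?E * ?H)
      = \<i> * of_real e * of_real pi * ?E * cerfc ?q" .
  have shift: "(\<integral>u. indicator {0..} u *\<^sub>R (exp (\<i> * of_real e * w * of_real u) * of_real (exp (-(u^2)/2))) \<partial>lborel)
      = of_real (sqrt 2) * ?E * ?H"
    using halfline_gaussian_complete_square[of "\<i> * of_real e * w"] by (simp only: sq minus_mult_left)
  show ?thesis
    using gaussian_cauchy_transform_laplace[OF e pos] unfolding shift prefactor .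
qed

lemma integral_gaussian_div_linear:
  fixes x e :: real and z :: complex
  assumes x: "x > 0" and e: "e \<in> {-1, 1}" and pos: "e * Im z > 0"
  shows "integral UNIV (\<lambda>s::real. exp (- of_real (x * s^2)) / (of_real s - z))
       = \<i> * of_real e * of_real pi * exp (- of_real x * z^2)
         * cerfc (- \<i> * of_real e * of_real (sqrt x) * z)"
proof -
  define a where "a = sqrt (2 * x)"
  define w where "w = of_real a * z"
  define g where "g = (\<lambda>s::real. exp (- of_real (x * s^2)) / (of_real s - z))"
  define G where "G = (\<lambda>y::real. of_real (exp (-(y^2)/2)) / (of_real y - w))"
  have a: "a > 0" and a2: "a^2 = 2 * x"
    unfolding a_def using x by simp_all
  have "e * Im w > 0"
    unfolding w_def using a pos by (simp add: mult.left_commute)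
  note G = gaussian_cauchy_transform[OF e this, folded G_def]
  have rescale: "(\<lambda>y. g (0 + (1/a) * y)) = (\<lambda>y. of_real a * G y)"
  proof
    fix y :: real
    have exponent: "x * (0 + (1/a) * y)^2 = y^2 / 2"
      using a a2 x by (simp add: field_simps)
    have denominator: "complex_of_real (0 + (1/a) * y) - z = (of_real y - w) / of_real a"
      unfolding w_def using a by (simp add: field_simps)
    show "g (0 + (1/a) * y) = of_real a * G y"
      unfolding g_def G_def exponent denominator using a by (simp add: exp_of_real[symmetric])
  qed
  have "integrable lborel (\<lambda>y. g (0 + (1/a) * y))"
    unfolding rescale using G by (auto simp: has_bochner_integral_iff)
  then have "integrable lborel g"
    using lborel_integrable_real_affine_iff[of "1/a" g 0] a by simp
  then have "integral UNIV g = integral\<^sup>L lborel g"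
    by (rule integral_lborel)
  also have "\<dots> = \<bar>1/a\<bar> *\<^sub>R (\<integral>y. g (0 + (1/a) * y) \<partial>lborel)"
    by (rule lborel_integral_real_affine) (use a in simp)
  also have "\<dots> = integral\<^sup>L lborel G"
    unfolding rescale integral_mult_right_zero using a by (simp add: scaleR_conv_of_real)
  finally have "integral UNIV g = integral\<^sup>L lborel G" .
  moreover have "- (w^2) / 2 = - of_real x * z^2"
    unfolding w_def using a2 by (simp add: power_mult_distrib flip: of_real_power)
  moreover have "- \<i> * of_real e * w / of_real (sqrt 2) = - \<i> * of_real e * of_real (sqrt x) * z"
    unfolding w_def a_def by (simp add: real_sqrt_mult field_simps)
  ultimately show ?thesis
    using G unfolding g_def by (simp add: has_bochner_integral_iff)
qed

lemma csqrt_imag_axis: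
  fixes \<beta> s :: real
  assumes \<beta>: "\<beta> \<in> {-1, 1}" and s: "\<beta> * s < 1"
  shows "csqrt (\<i> * of_real \<beta> - \<i> * of_real s) = of_real (sqrt ((1 - \<beta> * s) / 2)) * (1 + \<i> * of_real \<beta>)"
proof (rule csqrt_unique)
  have "(of_real (sqrt ((1 - \<beta> * s) / 2)) * (1 + \<i> * of_real \<beta>))^2
      = of_real ((1 - \<beta> * s) / 2) * (1 + \<i> * of_real \<beta>)^2"
    using s by (simp add: power_mult_distrib flip: of_real_power)
  also have "\<dots> = \<i> * of_real \<beta> - \<i> * of_real s"
    using \<beta> by (auto simp: power2_eq_square field_simps)
  finally show "(of_real (sqrt ((1 - \<beta> * s) / 2)) * (1 + \<i> * of_real \<beta>))^2 = \<i> * of_real \<beta> - \<i> * of_real s" .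
qed (use s in simp)

lemma exp_neg_quarter_pi_i:
  fixes \<beta> :: real
  assumes "\<beta> \<in> {-1, 1}"
  shows "exp (- of_real \<beta> * of_real pi / 4 * \<i>) = of_real (sqrt 2 / 2) * (1 - \<i> * of_real \<beta>)"
proof -
  have "exp (- of_real \<beta> * of_real pi / 4 * \<i>) = cis (- \<beta> * pi / 4)"
    by (simp add: cis_conv_exp mult_ac)
  then show ?thesis
    using assms by (auto simp: complex_eq_iff cos_45 sin_45)
qed

lemma summand_integral_eq_erfc:
  fixes \<rho> x \<beta> \<sigma> s :: real
  assumes x: "x > 0" and \<beta>: "\<beta> \<in> {-1, 1}" and \<sigma>: "\<sigma> \<in> {-1, 1}" and s: "\<bar>s\<bar> < 1"
  shows "(- (of_real (\<beta> * \<rho>) * exp (\<i> * of_real (x * \<beta>)) / (2 * of_real pi * \<i>)))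
            * integral UNIV (\<lambda>t::real. exp (- of_real (x * t^2))
                 / (of_real t - of_real \<sigma> * csqrt (\<i> * of_real \<beta> - \<i> * of_real s)))
       = - of_real (\<rho> / 2) * (of_real \<sigma> * exp (\<i> * of_real (x * s))
            * cerfc (exp (- of_real \<beta> * of_real pi / 4 * \<i>) * of_real (sqrt x)
                     * csqrt (of_real (1 - \<beta> * s))))"
proof -
  define r where "r = sqrt ((1 - \<beta> * s) / 2)"
  define z where "z = of_real \<sigma> * csqrt (\<i> * of_real \<beta> - \<i> * of_real s)"
  have \<beta>s: "\<beta> * s < 1"
    using \<beta> s by auto
  have r: "r > 0"
    unfolding r_def using \<beta>s by simp
  have z: "z = of_real (\<sigma> * r) * (1 + \<i> * of_real \<beta>)"
    unfolding z_def r_def using csqrt_imag_axis[OF \<beta>] \<beta>s by simp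
  have \<beta>\<beta>: "\<beta> * \<beta> = 1" and \<sigma>\<sigma>: "\<sigma> * \<sigma> = 1"
    using \<beta> \<sigma> by auto
  have "(\<sigma> * \<beta>) * Im z = (\<sigma> * \<sigma>) * (\<beta> * \<beta>) * r"
    unfolding z by (simp add: mult_ac)
  then have "(\<sigma> * \<beta>) * Im z > 0"
    using r \<beta>\<beta> \<sigma>\<sigma> by simp
  note integral = integral_gaussian_div_linear[OF x _ this]
  have z2: "z^2 = \<i> * of_real \<beta> - \<i> * of_real s"
    unfolding z_def power_mult_distrib using \<sigma> by auto
  have "\<i> * of_real (x * \<beta>) + - of_real x * z^2 = \<i> * of_real (x * s)"
    unfolding z2 by (simp add: algebra_simps)
  then have "exp (\<i> * of_real (x * \<beta>)) * exp (- of_real x * z^2) = exp (\<i> * of_real (x * s))"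
    by (simp flip: exp_add)
  moreover have "- \<i> * of_real (\<sigma> * \<beta>) * of_real (sqrt x) * z
      = exp (- of_real \<beta> * of_real pi / 4 * \<i>) * of_real (sqrt x) * csqrt (of_real (1 - \<beta> * s))"
  proof -
    have "csqrt (of_real (1 - \<beta> * s)) = of_real (sqrt 2 * r)"
      unfolding r_def using \<beta>s by (simp add: csqrt_of_real real_sqrt_divide)
    moreover have "complex_of_real (sqrt 2) * of_real (sqrt 2) = 2"
      by (simp flip: of_real_mult)
    ultimately show ?thesis
      unfolding z exp_neg_quarter_pi_i[OF \<beta>] using \<beta> \<sigma>
      by (auto simp: algebra_simps)
  qed
  ultimately show ?thesis
    unfolding z_def[symmetric] using integral \<beta> \<sigma> by (auto simp: field_simps)
qed

lemma cos_nonzero_of_mem_Pset: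
  assumes not_neg_pi: "\<not> (\<exists>k::int. c = - pi + 2 * pi * \<rho> * of_int k)"
    and not_zero: "\<not> (\<exists>k::int. c = 2 * pi * \<rho> * of_int k)"
    and "\<phi> \<in> Pset \<rho> c"
  shows "cos \<phi> \<noteq> 0"
proof
  assume "cos \<phi> = 0"
  then obtain n :: int where n: "\<phi> = of_int n * pi + pi/2"
    using cos_zero_iff_int2 by auto
  from assms(3) obtain k :: int where k: "\<phi> = pi/2 + c + 2*pi*\<rho> * of_int k"
    and range: "-pi \<le> \<phi>" "\<phi> < pi"
    unfolding Pset_def by auto
  have "pi * (- 3/2) \<le> pi * of_int n" and "pi * of_int n < pi * (1/2)"
    using range unfolding n by (simp_all add: field_simps)
  then have "- 3/2 \<le> (of_int n :: real)" and "(of_int n :: real) < 1/2"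
    by (simp_all only: mult_le_cancel_left_pos[OF pi_gt_zero] mult_less_cancel_left_pos[OF pi_gt_zero])
  then consider "n = 0" | "n = -1"
    by linarith
  then show False
  proof cases
    case 1
    then have "c = 2 * pi * \<rho> * of_int (- k)" using k n by simp
    with not_zero show False by blast
  next
    case 2
    then have "c = - pi + 2 * pi * \<rho> * of_int (- k)" using k n by simp
    with not_neg_pi show False by blast
  qed
qed

lemma abs_sin_less_one:
  fixes \<phi> :: real
  assumes "cos \<phi> \<noteq> 0"
  shows "\<bar>sin \<phi>\<bar> < 1"
proof -
  have "(cos \<phi>)^2 > 0"
    using assms by simp
  then have "(sin \<phi>)^2 < 1"
    using sin_cos_squared_add[of \<phi>] by linarith
  then show ?thesis
    by (simp add: abs_square_less_1)
qed

theorem mainTheorem7: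
  fixes \<rho> x \<alpha> \<beta> \<eta> :: real
  assumes "\<rho> > 0" and "x > 0"
    and "\<alpha> \<in> {-1, 1}" and "\<beta> \<in> {-1, 1}"
    and "\<not> (\<exists>k::int. \<alpha> * \<eta> = - pi + 2 * pi * \<rho> * of_int k)"
    and "\<not> (\<exists>k::int. \<alpha> * \<eta> = 2 * pi * \<rho> * of_int k)"
  shows "(\<Sum>\<phi>\<in>Pset \<rho> (\<alpha> * \<eta>).
            (- (of_real (\<beta> * \<rho>) * exp (\<i> * of_real (x * \<beta>)) / (2 * of_real pi * \<i>)))
            * integral UNIV (\<lambda>s::real. exp (- of_real (x * s^2))
                 / (of_real s - of_real (sgn (cos \<phi>)) * csqrt (\<i> * of_real \<beta> - \<i> * of_real (sin \<phi>)))))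
       = - of_real (\<rho> / 2) * (\<Sum>\<phi>\<in>Pset \<rho> (\<alpha> * \<eta>).
            of_real (sgn (cos \<phi>)) * exp (\<i> * of_real (x * sin \<phi>))
            * cerfc (exp (- of_real \<beta> * of_real pi / 4 * \<i>) * of_real (sqrt x)
                     * csqrt (of_real (1 - \<beta> * sin \<phi>))))"
  unfolding sum_distrib_left
proof (intro sum.cong refl summand_integral_eq_erfc assms(2,4))
  fix \<phi> assume "\<phi> \<in> Pset \<rho> (\<alpha> * \<eta>)"
  then have "cos \<phi> \<noteq> 0"
    using cos_nonzero_of_mem_Pset assms(5,6) by blast
  then show "sgn (cos \<phi>) \<in> {-1, 1}" and "\<bar>sin \<phi>\<bar> < 1"
    by (auto simp: sgn_real_def abs_sin_less_one)
qed

end
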